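(* Let $G$ be an almost simple group with socle $G_0=\mathrm{P}\Omega_{10}^+(q)$ and let $H$ be a $\mathcal{C}_2$-subgroup of type $O_2^+(q)\wr S_5$, i.e. the stabiliser in $G$ of an orthogonal decomposition $V=V_1\perp V_2\perp V_3\perp V_4\perp V_5$ of the natural $10$-dimensional orthogonal module $V$ into nondegenerate $2$-spaces of plus-type. If $q\geqslant 8$, then $b(G,H)\leqslant 3$.
   Context: A finite group $G$ is almost simple with socle $G_0$ if $G_0\leqslant G\leqslant\mathrm{Aut}(G_0)$ with $G_0$ non-abelian simple. For a subgroup $H\leqslant G$, $H_G=\bigcap_{g\in G}H^g$ is its core and $b(G,H)=\min\{|S| : S\subseteq G,\ \bigcap_{g\in S}H^g=H_G\}$. A nondegenerate $2$-space is of plus-type if it contains a nonzero totally singular vector (equivalently a $1$-dimensional totally singular subspace). *)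

theory Defs
  imports "HOL-Algebra.Algebra" "HOL-Library.Numeral_Type"
begin

type_synonym 'k vect = "10 \<Rightarrow> 'k"

definition vadd :: "'k::field vect \<Rightarrow> 'k vect \<Rightarrow> 'k vect" where
  "vadd x y = (\<lambda>i. x i + y i)"

definition smul :: "'k::field \<Rightarrow> 'k vect \<Rightarrow> 'k vect" where
  "smul c x = (\<lambda>i. c * x i)"

definition vzero :: "'k::field vect" where
  "vzero = (\<lambda>i. 0)"

definition Qf :: "'k::field vect \<Rightarrow> 'k" where
  "Qf x = (\<Sum>j<(5::nat). x (of_nat (2*j)) * x (of_nat (2*j+1)))"

definition Bf :: "'k::field vect \<Rightarrow> 'k vect \<Rightarrow> 'k" where
  "Bf x y = Qf (vadd x y) - Qf x - Qf y"

definition field_aut :: "('k::field \<Rightarrow> 'k) \<Rightarrow> bool" where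
  "field_aut s \<longleftrightarrow> bij s \<and> (\<forall>a b. s (a + b) = s a + s b \<and> s (a * b) = s a * s b)"

definition semisim :: "('k::field vect \<Rightarrow> 'k vect) \<Rightarrow> bool" where
  "semisim g \<longleftrightarrow> bij g \<and> (\<exists>s lam. field_aut s \<and> lam \<noteq> 0 \<and>
     (\<forall>x y. g (vadd x y) = vadd (g x) (g y)) \<and>
     (\<forall>c x. g (smul c x) = smul (s c) (g x)) \<and>
     (\<forall>x. Qf (g x) = lam * s (Qf x)))"

definition isometry :: "('k::field vect \<Rightarrow> 'k vect) \<Rightarrow> bool" where
  "isometry g \<longleftrightarrow> bij g \<and>
     (\<forall>x y. g (vadd x y) = vadd (g x) (g y)) \<and>
     (\<forall>c x. g (smul c x) = smul c (g x)) \<and>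
     (\<forall>x. Qf (g x) = Qf x)"

definition GammaO :: "('k::field vect \<Rightarrow> 'k vect) monoid" where
  "GammaO = \<lparr>carrier = {g. semisim g}, monoid.mult = (\<circ>), one = id\<rparr>"

definition OrthGrp :: "('k::field vect \<Rightarrow> 'k vect) monoid" where
  "OrthGrp = \<lparr>carrier = {g. isometry g}, monoid.mult = (\<circ>), one = id\<rparr>"

definition Omega :: "('k::field vect \<Rightarrow> 'k vect) set" where
  "Omega = derived OrthGrp (carrier OrthGrp)"

text \<open>Nonzero scalar maps; the kernel of Gamma O \<rightarrow> P Gamma O.\<close>
definition Scalars :: "('k::field vect \<Rightarrow> 'k vect) set" where
  "Scalars = {g. \<exists>c. c \<noteq> (0::'k) \<and> g = smul c}"

definition subspace :: "'k::field vect set \<Rightarrow> bool" where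
  "subspace W \<longleftrightarrow> vzero \<in> W \<and> (\<forall>x\<in>W. \<forall>y\<in>W. vadd x y \<in> W) \<and> (\<forall>c. \<forall>x\<in>W. smul c x \<in> W)"

definition two_space :: "'k::field vect set \<Rightarrow> bool" where
  "two_space W \<longleftrightarrow> (\<exists>u v. W = {vadd (smul a u) (smul b v) | a b. True} \<and>
      (\<forall>a b. vadd (smul a u) (smul b v) = vzero \<longrightarrow> a = 0 \<and> b = 0))"

definition nondegenerate :: "'k::field vect set \<Rightarrow> bool" where
  "nondegenerate W \<longleftrightarrow> (\<forall>x\<in>W. (\<forall>y\<in>W. Bf x y = 0) \<longrightarrow> x = vzero)"

definition plus_type_2space :: "'k::field vect set \<Rightarrow> bool" where
  "plus_type_2space W \<longleftrightarrow> two_space W \<and> nondegenerate W \<and> (\<exists>v\<in>W. v \<noteq> vzero \<and> Qf v = 0)"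

definition plus_decomp :: "'k::field vect set set \<Rightarrow> bool" where
  "plus_decomp D \<longleftrightarrow> card D = 5 \<and> (\<forall>W\<in>D. plus_type_2space W) \<and>
     (\<forall>W\<in>D. \<forall>W'\<in>D. W \<noteq> W' \<longrightarrow> (\<forall>x\<in>W. \<forall>y\<in>W'. Bf x y = 0)) \<and>
     (\<forall>x. \<exists>f. (\<forall>W\<in>D. f W \<in> W) \<and> x = foldr vadd (map f (SOME l. set l = D \<and> distinct l)) vzero)"

definition decomp_stab :: "('k::field vect \<Rightarrow> 'k vect) set \<Rightarrow> 'k vect set set \<Rightarrow> ('k vect \<Rightarrow> 'k vect) set" where
  "decomp_stab G D = {g\<in>G. \<forall>W\<in>D. g ` W \<in> D}"

definition conjg :: "('a, 'b) monoid_scheme \<Rightarrow> 'a set \<Rightarrow> 'a \<Rightarrow> 'a set" where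
  "conjg G H g = {inv\<^bsub>G\<^esub> g \<otimes>\<^bsub>G\<^esub> h \<otimes>\<^bsub>G\<^esub> g | h. h \<in> H}"

definition core :: "('a, 'b) monoid_scheme \<Rightarrow> 'a set \<Rightarrow> 'a set" where
  "core G H = carrier G \<inter> (\<Inter>g\<in>carrier G. conjg G H g)"

definition base_size :: "('a, 'b) monoid_scheme \<Rightarrow> 'a set \<Rightarrow> nat" where
  "base_size G H = (LEAST n. \<exists>S. S \<subseteq> carrier G \<and> finite S \<and> card S = n \<and>
      carrier G \<inter> (\<Inter>g\<in>S. conjg G H g) = core G H)"

end

theory Submission
  imports Defs "HOL-Library.Function_Algebras" "HOL-Combinatorics.Cycles"
    "HOL-Algebra.Algebraic_Closure_Type"
begin

(* Choose a hyperbolic basis e_i, f_i of V adapted to the decomposition and work in the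
   corresponding coordinates. A semisimilarity stabilising the decomposition sends every singular
   basis vector to a multiple of a singular basis vector, so in these coordinates it is monomial: a
   field automorphism followed by a monomial matrix. The base is {1, x1, x2}, where x1 and x2 are
   the inverses of explicit products M1 t and M2 of long root elements; these lie in Omega because,
   over a field with more than two elements, every long root element is a commutator with a torus
   element. If h lies in the stabiliser and in its conjugates by x1 and x2, then the permutation
   part of h permutes the column supports of M1 t and of M2. Only the identity does so, and
   comparing entries then forces all diagonal entries of h to agree and its field automorphism to
   fix the primitive element t. Hence h is a scalar, and the scalars lie in the core. *)

(* Hilbert_Choice.inv, whose syntax is taken by the group inverse of HOL-Algebra. *)
abbreviation inv_fun :: "('a \<Rightarrow> 'b) \<Rightarrow> 'b \<Rightarrow> 'a" where
  "inv_fun f \<equiv> inv_into UNIV f"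

section \<open>Coordinates and the quadratic form\<close>

lemma ten_cases: "(x::10) = 0 \<or> x = 1 \<or> x = 2 \<or> x = 3 \<or> x = 4 \<or> x = 5 \<or> x = 6 \<or> x = 7 \<or> x = 8 \<or> x = 9"
proof (cases x)
  case (of_int z)
  then have "z = 0 \<or> z = 1 \<or> z = 2 \<or> z = 3 \<or> z = 4 \<or> z = 5 \<or> z = 6 \<or> z = 7 \<or> z = 8 \<or> z = 9"
    by auto
  then show ?thesis using of_int by auto
qed

lemma vadd_eq_plus: "vadd x y = x + y"
  by (simp add: vadd_def plus_fun_def)

lemma smul_apply [simp]: "smul c x i = c * x i"
  by (simp add: smul_def)

lemma smul_smul: "smul c (smul d x) = smul (c * d) x"
  by (auto simp: smul_def)

lemma sum_fun_apply: "(\<Sum>a\<in>A. f a) i = (\<Sum>a\<in>A. f a i :: 'c::comm_monoid_add)"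
  by (induction A rule: infinite_finite_induct) auto

definition unit_vec :: "10 \<Rightarrow> 'k::field vect" where
  "unit_vec j = (\<lambda>i. if i = j then 1 else 0)"

lemma unit_vec_neq_zero: "unit_vec j \<noteq> 0"
  by (simp add: unit_vec_def fun_eq_iff)

lemma vec_eq_sum_unit_vec: "(x::'k::field vect) = (\<Sum>j\<in>UNIV. smul (x j) (unit_vec j))"
proof
  fix i
  have "(\<Sum>j\<in>UNIV. smul (x j) (unit_vec j)) i = (\<Sum>j\<in>UNIV. if j = i then x j else 0)"
    unfolding sum_fun_apply by (rule sum.cong) (auto simp: unit_vec_def)
  then show "x i = (\<Sum>j\<in>UNIV. smul (x j) (unit_vec j)) i" by simp
qed

definition coord_support :: "'k::field vect \<Rightarrow> 10 set" where
  "coord_support y = {i. y i \<noteq> 0}"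

lemma coord_support_smul: "c \<noteq> 0 \<Longrightarrow> coord_support (smul c v) = coord_support v"
  by (simp add: coord_support_def)

definition ecoord :: "nat \<Rightarrow> 10" where "ecoord i = of_nat (2 * i)"
definition fcoord :: "nat \<Rightarrow> 10" where "fcoord i = of_nat (2 * i + 1)"

lemma less_5_cases: "i < (5::nat) \<Longrightarrow> i = 0 \<or> i = 1 \<or> i = 2 \<or> i = 3 \<or> i = 4"
  by auto

lemma coord_pair_cases: obtains i where "i < 5" "k = ecoord i \<or> k = fcoord i"
proof -
  have "k = ecoord 0 \<or> k = fcoord 0 \<or> k = ecoord 1 \<or> k = fcoord 1 \<or> k = ecoord 2 \<or> k = fcoord 2
      \<or> k = ecoord 3 \<or> k = fcoord 3 \<or> k = ecoord 4 \<or> k = fcoord 4"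
    using ten_cases[of k] by (simp add: ecoord_def fcoord_def)
  moreover have "(0::nat) < 5" "(1::nat) < 5" "(2::nat) < 5" "(3::nat) < 5" "(4::nat) < 5"
    by simp_all
  ultimately show ?thesis using that by blast
qed

lemma ecoord_eq_iff:
  assumes "i < 5" "j < 5" shows "ecoord i = ecoord j \<longleftrightarrow> i = j"
  using less_5_cases[OF assms(1)] less_5_cases[OF assms(2)] by (elim disjE) (simp_all add: ecoord_def)

lemma fcoord_eq_iff:
  assumes "i < 5" "j < 5" shows "fcoord i = fcoord j \<longleftrightarrow> i = j"
  using less_5_cases[OF assms(1)] less_5_cases[OF assms(2)] by (elim disjE) (simp_all add: fcoord_def)

lemma ecoord_neq_fcoord:
  assumes "i < 5" "j < 5" shows "ecoord i \<noteq> fcoord j"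
  using less_5_cases[OF assms(1)] less_5_cases[OF assms(2)] by (elim disjE) (simp_all add: ecoord_def fcoord_def)

lemma fcoord_neq_ecoord: "i < 5 \<Longrightarrow> j < 5 \<Longrightarrow> fcoord j \<noteq> ecoord i"
  using ecoord_neq_fcoord by metis

lemma vec_eq_by_coord_pairs:
  assumes "\<And>i. i < 5 \<Longrightarrow> y (ecoord i) = z (ecoord i) \<and> y (fcoord i) = z (fcoord i)"
  shows "y = z"
proof
  fix k
  obtain i where "i < 5" "k = ecoord i \<or> k = fcoord i" by (rule coord_pair_cases)
  then show "y k = z k" using assms by auto
qed

lemma Qf_eq: "Qf x = x 0 * x 1 + x 2 * x 3 + x 4 * x 5 + x 6 * x 7 + x 8 * x 9"
  by (simp add: Qf_def numeral_eq_Suc lessThan_Suc add.assoc)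

lemma Qf_eq_sum_coord_pairs: "Qf y = (\<Sum>i<5. y (ecoord i) * y (fcoord i))"
  by (simp add: Qf_def ecoord_def fcoord_def)

lemma Bf_eq: "Bf x y = x 0 * y 1 + x 1 * y 0 + x 2 * y 3 + x 3 * y 2 + x 4 * y 5 + x 5 * y 4
    + x 6 * y 7 + x 7 * y 6 + x 8 * y 9 + x 9 * y 8"
  by (simp add: Bf_def Qf_eq vadd_def) (simp add: algebra_simps)

lemma Bf_commute: "Bf x y = Bf y x"
  by (simp add: Bf_eq algebra_simps)

lemma Bf_add_left: "Bf (x + y) z = Bf x z + Bf y z"
  by (simp add: Bf_eq algebra_simps)

lemma Bf_add_right: "Bf x (y + z) = Bf x y + Bf x z"
  by (simp add: Bf_eq algebra_simps)

lemma Bf_smul_left: "Bf (smul c x) z = c * Bf x z"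
  by (simp add: Bf_eq algebra_simps)

lemma Bf_smul_right: "Bf x (smul c y) = c * Bf x y"
  by (simp add: Bf_eq algebra_simps)

lemma Bf_sum_left: "Bf (\<Sum>j\<in>A. g j) z = (\<Sum>j\<in>A. Bf (g j) z)"
proof (induction A rule: infinite_finite_induct)
  case (insert x F)
  then show ?case by (simp only: sum.insert[OF insert(1,2)] Bf_add_left)
qed (simp_all add: Bf_eq)

lemma Qf_add: "Qf (x + y) = Qf x + Qf y + Bf x y"
  by (simp add: Bf_def vadd_eq_plus)

lemma Qf_smul: "Qf (smul c x) = c * c * Qf x"
  by (simp add: Qf_eq algebra_simps)

lemma Bf_self: "Bf x x = 2 * Qf x"
  by (simp add: Bf_eq Qf_eq algebra_simps)

lemma Qf_sum_orthogonal:
  assumes "finite A" and "\<And>i j. i \<in> A \<Longrightarrow> j \<in> A \<Longrightarrow> i \<noteq> j \<Longrightarrow> Bf (w i) (w j) = 0"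
  shows "Qf (\<Sum>i\<in>A. w i) = (\<Sum>i\<in>A. Qf (w i))"
  using assms
proof (induction A rule: finite_induct)
  case empty
  then show ?case by (simp add: Qf_eq)
next
  case (insert x F)
  have "Bf (w x) (\<Sum>i\<in>F. w i) = (\<Sum>i\<in>F. Bf (w i) (w x))"
    by (simp add: Bf_commute[of "w x"] Bf_sum_left)
  also have "\<dots> = 0" using insert(2,4) by (intro sum.neutral) force
  finally have "Bf (w x) (\<Sum>i\<in>F. w i) = 0" .
  then show ?case using insert by (simp only: sum.insert[OF insert(1,2)] Qf_add) simp
qed

lemma singular_vec_on_coord_pair:
  assumes j: "j < 5" and y_zero: "\<And>i. i < 5 \<Longrightarrow> i \<noteq> j \<Longrightarrow> y (ecoord i) = 0 \<and> y (fcoord i) = 0"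
    and "Qf y = 0" "y \<noteq> 0"
  shows "\<exists>c p. c \<noteq> 0 \<and> y = smul c (unit_vec p)"
proof -
  have "Qf y = (\<Sum>i<5. if i = j then y (ecoord i) * y (fcoord i) else 0)"
    unfolding Qf_eq_sum_coord_pairs by (rule sum.cong) (use y_zero in auto)
  then have prod_0: "y (ecoord j) * y (fcoord j) = 0" using j \<open>Qf y = 0\<close> by simp
  show ?thesis
  proof (cases "y (ecoord j) = 0")
    case True
    have "y = smul (y (fcoord j)) (unit_vec (fcoord j))"
      by (rule vec_eq_by_coord_pairs)
        (use y_zero True j in \<open>auto simp: unit_vec_def fcoord_eq_iff fcoord_neq_ecoord ecoord_neq_fcoord\<close>)
    moreover from this have "y (fcoord j) \<noteq> 0" using \<open>y \<noteq> 0\<close> by (auto simp: smul_def)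
    ultimately show ?thesis by blast
  next
    case False
    then have "y (fcoord j) = 0" using prod_0 by simp
    have "y = smul (y (ecoord j)) (unit_vec (ecoord j))"
      by (rule vec_eq_by_coord_pairs) (use y_zero j \<open>y (fcoord j) = 0\<close> in
          \<open>auto simp: unit_vec_def ecoord_eq_iff ecoord_neq_fcoord fcoord_neq_ecoord\<close>)
    then show ?thesis using False by blast
  qed
qed

lemma two_space_closed:
  assumes "two_space W"
  shows two_space_add_closed: "x \<in> W \<Longrightarrow> y \<in> W \<Longrightarrow> x + y \<in> W"
    and two_space_smul_closed: "x \<in> W \<Longrightarrow> smul c x \<in> W"
proof -
  obtain u v where W: "W = {vadd (smul a u) (smul b v) | a b. True}"
    using assms unfolding two_space_def by blast
  have span: "vadd (smul a u) (smul b v) = (\<lambda>i. a * u i + b * v i)" for a b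
    by (simp add: vadd_def smul_def)
  show "x \<in> W \<Longrightarrow> y \<in> W \<Longrightarrow> x + y \<in> W"
  proof -
    assume "x \<in> W" "y \<in> W"
    then obtain a1 b1 a2 b2 where "x = vadd (smul a1 u) (smul b1 v)" "y = vadd (smul a2 u) (smul b2 v)"
      using W by blast
    then have "x + y = vadd (smul (a1 + a2) u) (smul (b1 + b2) v)"
      by (simp add: span fun_eq_iff algebra_simps)
    then show "x + y \<in> W" using W by blast
  qed
  show "x \<in> W \<Longrightarrow> smul c x \<in> W"
  proof -
    assume "x \<in> W"
    then obtain a b where "x = vadd (smul a u) (smul b v)"
      using W by blast
    then have "smul c x = vadd (smul (c * a) u) (smul (c * b) v)"
      by (simp add: span fun_eq_iff algebra_simps)
    then show "smul c x \<in> W" using W by blast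
  qed
qed

lemma two_space_smul_image:
  assumes "two_space W" "c \<noteq> 0"
  shows "smul c ` W = W"
proof
  show "smul c ` W \<subseteq> W" using two_space_smul_closed[OF assms(1)] by blast
  show "W \<subseteq> smul c ` W"
  proof
    fix w assume "w \<in> W"
    then have "smul (inverse c) w \<in> W" using two_space_smul_closed[OF assms(1)] by blast
    moreover have "w = smul c (smul (inverse c) w)" using assms(2) by (simp add: fun_eq_iff)
    ultimately show "w \<in> smul c ` W" by blast
  qed
qed

lemma plus_type_2space_hyperbolic_pair:
  assumes "plus_type_2space W"
  obtains e f where "e \<in> W" "f \<in> W" "Qf e = 0" "Qf f = 0" "Bf e f = 1"
proof -
  have W: "two_space W" "nondegenerate W" using assms unfolding plus_type_2space_def by blast+
  obtain v where v: "v \<in> W" "v \<noteq> vzero" "Qf v = 0"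
    using assms unfolding plus_type_2space_def by blast
  obtain y where y: "y \<in> W" "Bf v y \<noteq> 0" using W(2) v(1,2) unfolding nondegenerate_def by blast
  define y' where "y' = smul (inverse (Bf v y)) y"
  have y': "y' \<in> W" "Bf v y' = 1"
    using y two_space_smul_closed[OF W(1)] by (simp_all add: y'_def Bf_smul_right)
  txt \<open>Correct \<open>y'\<close> by a multiple of the singular vector \<open>v\<close> to make it singular.\<close>
  define f where "f = y' + smul (- Qf y') v"
  have "f \<in> W" unfolding f_def using v(1) y'(1) W(1) by (simp add: two_space_closed)
  moreover have "Qf f = 0"
    by (simp add: f_def Qf_add Qf_smul Bf_smul_right Bf_commute[of y' v] y'(2) v(3))
  moreover have "Bf v f = 1"
    by (simp add: f_def Bf_add_right Bf_smul_right Bf_self y'(2) v(3))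
  ultimately show ?thesis using that v(1,3) by blast
qed

section \<open>Automorphisms of finite fields\<close>

lemma field_aut_0: "field_aut s \<Longrightarrow> s 0 = 0"
  unfolding field_aut_def by (metis add_cancel_right_right add_0)

lemma field_aut_eq_0_iff: "field_aut s \<Longrightarrow> s c = 0 \<longleftrightarrow> c = 0"
  using field_aut_0[of s] unfolding field_aut_def by (metis bij_is_inj injD)

lemma field_aut_1:
  assumes "field_aut s" shows "s 1 = 1"
proof -
  have "s 1 * s 1 = s 1 * 1" using assms unfolding field_aut_def by (metis mult_1 mult_1_right)
  moreover have "s 1 \<noteq> 0" using field_aut_eq_0_iff[OF assms, of 1] by simp
  ultimately show ?thesis by simp
qed

lemma field_aut_uminus:
  assumes "field_aut s" shows "s (- x) = - s x"
proof -
  have "s x + s (- x) = 0" using assms field_aut_0[OF assms] unfolding field_aut_def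
    by (metis add.right_inverse)
  then show ?thesis by (simp add: eq_neg_iff_add_eq_0 add.commute)
qed

lemma field_aut_power: "field_aut s \<Longrightarrow> s (x ^ n) = s x ^ n"
  by (induction n) (simp_all add: field_aut_1, simp add: field_aut_def)

lemma pow_ring_of_type_algebra: "x [^]\<^bsub>ring_of_type_algebra\<^esub> (n::nat) = (x::'a::field) ^ n"
  by (induction n) (simp_all add: ring_of_type_algebra_def)

lemma finite_field_primitive_element:
  "\<exists>t :: 'k::{field,finite}. t \<noteq> 0 \<and> (\<forall>x. x \<noteq> 0 \<longrightarrow> (\<exists>n. x = t ^ n))"
proof -
  let ?K = "ring_of_type_algebra :: 'k ring"
  interpret K: field ?K by (rule field_from_type_algebra)
  have units: "carrier (mult_of ?K) = UNIV - {0}"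
    by (simp add: ring_of_type_algebra_def)
  obtain t where "t \<in> carrier (mult_of ?K)" "carrier (mult_of ?K) = {t [^]\<^bsub>?K\<^esub> i | i::nat. i \<in> UNIV}"
    using K.finite_field_mult_group_has_gen by (auto simp: ring_of_type_algebra_def)
  then show ?thesis using units by (auto simp: pow_ring_of_type_algebra)
qed

lemma field_aut_fixing_primitive_element:
  assumes "field_aut s" "s t = t" "\<And>x. x \<noteq> 0 \<Longrightarrow> \<exists>n. x = t ^ n"
  shows "s x = x"
proof (cases "x = 0")
  case True
  then show ?thesis using field_aut_0[OF assms(1)] by simp
next
  case False
  then obtain n where "x = t ^ n" using assms(3) by blast
  then show ?thesis using field_aut_power[OF assms(1)] assms(2) by simp
qed

lemma exists_neq_0_1:
  assumes "CARD('k) \<ge> 3"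
  obtains c :: "'k::field" where "c \<noteq> 0" "c \<noteq> 1"
proof -
  have "\<not> (UNIV::'k set) \<subseteq> {0, 1}"
  proof
    assume "(UNIV::'k set) \<subseteq> {0, 1}"
    then have "CARD('k) \<le> card {0::'k, 1}" by (rule card_mono[rotated]) simp
    also have "\<dots> \<le> 2" by (simp add: card_insert_le_m1)
    finally show False using assms by simp
  qed
  then show ?thesis using that by blast
qed

section \<open>Monomial semilinear maps\<close>

definition semilinear :: "('k::field vect \<Rightarrow> 'k vect) \<Rightarrow> ('k \<Rightarrow> 'k) \<Rightarrow> bool" where
  "semilinear f s \<longleftrightarrow> (\<forall>x y. f (x + y) = f x + f y) \<and> (\<forall>c x. f (smul c x) = smul (s c) (f x))"

definition monomial :: "('k::field vect \<Rightarrow> 'k vect) \<Rightarrow> (10 \<Rightarrow> 'k) \<Rightarrow> (10 \<Rightarrow> 10) \<Rightarrow> bool" where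
  "monomial f a \<tau> \<longleftrightarrow> inj \<tau> \<and> (\<forall>j. a j \<noteq> 0) \<and> (\<forall>j. f (unit_vec j) = smul (a j) (unit_vec (\<tau> j)))"

lemma semilinear_0:
  assumes "semilinear f s" shows "f 0 = 0"
proof -
  have "f (0 + 0) = f 0 + f 0" using assms unfolding semilinear_def by blast
  then show ?thesis by simp
qed

lemma semilinear_sum:
  assumes "semilinear f s" shows "f (\<Sum>j\<in>A. g j) = (\<Sum>j\<in>A. f (g j))"
proof (induction A rule: infinite_finite_induct)
  case (insert x F)
  then show ?case using assms unfolding semilinear_def by (simp only: sum.insert[OF insert(1,2)])
next
  case (infinite A)
  then show ?case by (simp only: sum.infinite[OF infinite] semilinear_0[OF assms])
qed (simp only: sum.empty semilinear_0[OF assms])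

lemma monomial_apply:
  assumes "semilinear f s" "monomial f a \<tau>"
  shows "f y (\<tau> j) = a j * s (y j)"
proof -
  have inj: "inj \<tau>" and f_unit: "\<And>j. f (unit_vec j) = smul (a j) (unit_vec (\<tau> j))"
    using assms(2) unfolding monomial_def by blast+
  have "f y = f (\<Sum>m\<in>UNIV. smul (y m) (unit_vec m))" using vec_eq_sum_unit_vec[of y] by simp
  also have "\<dots> = (\<Sum>m\<in>UNIV. smul (s (y m)) (smul (a m) (unit_vec (\<tau> m))))"
    by (simp only: semilinear_sum[OF assms(1)]) (use assms(1) in \<open>simp add: semilinear_def f_unit\<close>)
  finally have "f y = (\<Sum>m\<in>UNIV. smul (s (y m)) (smul (a m) (unit_vec (\<tau> m))))" .
  then have "f y (\<tau> j) = (\<Sum>m\<in>UNIV. s (y m) * (a m * unit_vec (\<tau> m) (\<tau> j)))"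
    by (simp add: sum_fun_apply)
  also have "\<dots> = (\<Sum>m\<in>UNIV. if m = j then s (y m) * a m else 0)"
    by (rule sum.cong) (auto simp: unit_vec_def inj_eq[OF inj])
  finally show ?thesis by simp
qed

lemma coord_support_monomial:
  assumes "semilinear f s" "monomial f a \<tau>" "\<And>c. s c = 0 \<longleftrightarrow> c = 0"
  shows "coord_support (f y) = \<tau> ` coord_support y"
proof -
  have "inj \<tau>" and a: "\<And>j. a j \<noteq> 0" using assms(2) unfolding monomial_def by blast+
  then have "surj \<tau>" by (simp add: finite_UNIV_inj_surj)
  have "coord_support (f y) = \<tau> ` {j. f y (\<tau> j) \<noteq> 0}"
  proof (rule Set.set_eqI, rule iffI)
    fix i assume "i \<in> coord_support (f y)"
    moreover obtain j where "i = \<tau> j" using \<open>surj \<tau>\<close> by (metis surjD)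
    ultimately show "i \<in> \<tau> ` {j. f y (\<tau> j) \<noteq> 0}" by (auto simp: coord_support_def)
  qed (auto simp: coord_support_def)
  then show ?thesis using monomial_apply[OF assms(1,2)] a assms(3) by (simp add: coord_support_def)
qed

lemma monomial_intertwining:
  assumes h: "semilinear h s" "monomial h a \<tau>" "\<And>c. s c = 0 \<longleftrightarrow> c = 0"
    and k: "monomial k b \<pi>" and M: "\<And>c x. M (smul c x) = smul c (M x)" and hM: "h \<circ> M = M \<circ> k"
  shows "h (M (unit_vec q)) = smul (b q) (M (unit_vec (\<pi> q)))"
    and "\<tau> ` coord_support (M (unit_vec q)) = coord_support (M (unit_vec (\<pi> q)))"
proof -
  have "h (M (unit_vec q)) = M (k (unit_vec q))" using hM by (metis comp_apply)
  also have "\<dots> = smul (b q) (M (unit_vec (\<pi> q)))" using k M unfolding monomial_def by simp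
  finally show col: "h (M (unit_vec q)) = smul (b q) (M (unit_vec (\<pi> q)))" .
  have "b q \<noteq> 0" using k unfolding monomial_def by blast
  then show "\<tau> ` coord_support (M (unit_vec q)) = coord_support (M (unit_vec (\<pi> q)))"
    using coord_support_monomial[OF h] col coord_support_smul by metis
qed

lemma monomial_perm_inj:
  assumes f: "inj f" "semilinear f s" "surj s"
    and a: "\<And>q. a q \<noteq> 0" and f_unit: "\<And>q. f (unit_vec q) = smul (a q) (unit_vec (\<tau> q))"
  shows "inj \<tau>"
proof (rule injI)
  fix q q' assume eq: "\<tau> q = \<tau> q'"
  obtain \<mu> where \<mu>: "s \<mu> = a q / a q'" using f(3) by (metis surjD)
  have "f (smul \<mu> (unit_vec q')) = smul (s \<mu>) (smul (a q') (unit_vec (\<tau> q')))"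
    using f(2) by (simp add: semilinear_def f_unit del: smul_apply)
  also have "\<dots> = f (unit_vec q)" using a[of q'] by (simp add: \<mu> smul_smul eq f_unit)
  finally have "smul \<mu> (unit_vec q') = unit_vec q" using f(1) by (simp add: inj_eq)
  then have "\<mu> * unit_vec q' q = 1" by (metis smul_apply unit_vec_def)
  then show "q = q'" by (auto simp: unit_vec_def split: if_splits)
qed

section \<open>Root elements and \<open>\<Omega>\<close>\<close>

lemma isometry_bij: "isometry g \<Longrightarrow> bij g"
  by (simp add: isometry_def)

lemma isometry_comp: "isometry g \<Longrightarrow> isometry h \<Longrightarrow> isometry (g \<circ> h)"
  by (auto simp: isometry_def bij_comp)

lemma bij_inv_fun_apply:
  assumes "bij u" shows "u (inv_fun u y) = y" "inv_fun u (u x) = x"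
  using assms by (simp_all add: bij_is_surj surj_f_inv_f bij_is_inj)

lemma isometry_inv:
  assumes "isometry g" shows "isometry (inv_fun g)"
proof -
  have b: "bij g" and add: "\<And>x y. g (vadd x y) = vadd (g x) (g y)"
    and sm: "\<And>c x. g (smul c x) = smul c (g x)" and q: "\<And>x. Qf (g x) = Qf x"
    using assms by (auto simp: isometry_def)
  note gi = bij_inv_fun_apply(1)[OF b] and ig = bij_inv_fun_apply(2)[OF b]
  show ?thesis unfolding isometry_def
  proof (intro conjI allI)
    show "bij (inv_fun g)" using b by (simp add: bij_imp_bij_inv)
    fix x y c
    show "inv_fun g (vadd x y) = vadd (inv_fun g x) (inv_fun g y)"
      using ig[of "vadd (inv_fun g x) (inv_fun g y)"] by (simp add: add gi)
    show "inv_fun g (smul c x) = smul c (inv_fun g x)"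
      using ig[of "smul c (inv_fun g x)"] by (simp add: sm gi)
    show "Qf (inv_fun g x) = Qf x" using q[of "inv_fun g x"] by (simp add: gi)
  qed
qed

lemma semisim_conj:
  assumes k: "semisim k" and \<phi>: "isometry \<phi>"
  shows "semisim (inv_fun \<phi> \<circ> k \<circ> \<phi>)"
proof -
  obtain s lam where s: "field_aut s" "lam \<noteq> 0"
    and k_add: "\<And>x y. k (x + y) = k x + k y" and k_smul: "\<And>c x. k (smul c x) = smul (s c) (k x)"
    and k_Q: "\<And>x. Qf (k x) = lam * s (Qf x)"
    using k unfolding semisim_def vadd_eq_plus by blast
  have \<psi>: "isometry (inv_fun \<phi>)" by (rule isometry_inv[OF \<phi>])
  have "bij (inv_fun \<phi> \<circ> k \<circ> \<phi>)"
    using k \<psi> \<phi> by (simp add: semisim_def isometry_bij bij_comp)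
  moreover note s
  moreover have "(inv_fun \<phi> \<circ> k \<circ> \<phi>) (x + y) = (inv_fun \<phi> \<circ> k \<circ> \<phi>) x + (inv_fun \<phi> \<circ> k \<circ> \<phi>) y" for x y
    using \<phi> \<psi> by (simp add: isometry_def vadd_eq_plus k_add)
  moreover have "(inv_fun \<phi> \<circ> k \<circ> \<phi>) (smul c x) = smul (s c) ((inv_fun \<phi> \<circ> k \<circ> \<phi>) x)" for c x
    using \<phi> \<psi> by (simp add: isometry_def k_smul del: smul_apply)
  moreover have "Qf ((inv_fun \<phi> \<circ> k \<circ> \<phi>) x) = lam * s (Qf x)" for x
    using \<phi> \<psi> by (simp add: isometry_def k_Q)
  ultimately show ?thesis unfolding semisim_def vadd_eq_plus by blast
qed

lemma m_inv_fun_monoid: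
  assumes "bij g" "inv_fun g \<in> carrier G" "monoid.mult G = (\<circ>)" "one G = id"
  shows "inv\<^bsub>G\<^esub> g = inv_fun g"
proof -
  have "g \<circ> inv_fun g = id" "inv_fun g \<circ> g = id"
    using assms(1) by (simp_all add: bij_is_surj bij_is_inj flip: surj_iff inj_iff)
  then show ?thesis
    unfolding m_inv_def using assms(2-4)
  proof (intro the_equality)
    fix y assume "y \<in> carrier G \<and> g \<otimes>\<^bsub>G\<^esub> y = \<one>\<^bsub>G\<^esub> \<and> y \<otimes>\<^bsub>G\<^esub> g = \<one>\<^bsub>G\<^esub>"
    then show "y = inv_fun g" using assms(3,4) inv_unique_comp[of g y] by simp
  qed simp
qed

lemma inv_conj:
  assumes "bij \<phi>" "bij d" shows "inv_fun (\<phi> \<circ> d \<circ> inv_fun \<phi>) = \<phi> \<circ> inv_fun d \<circ> inv_fun \<phi>"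
  by (rule inv_unique_comp)
    (use assms in \<open>simp_all add: fun_eq_iff bij_inv_fun_apply\<close>)

lemma m_inv_OrthGrp: "isometry g \<Longrightarrow> inv\<^bsub>OrthGrp\<^esub> g = inv_fun g"
  by (rule m_inv_fun_monoid) (simp_all add: isometry_bij isometry_inv OrthGrp_def)

lemma conj_commutator_in_Omega:
  assumes p: "isometry \<phi>" and d: "isometry d" and r: "isometry r"
  shows "\<phi> \<circ> (d \<circ> r \<circ> inv_fun d \<circ> inv_fun r) \<circ> inv_fun \<phi> \<in> Omega"
proof -
  define h1 where "h1 = \<phi> \<circ> d \<circ> inv_fun \<phi>"
  define h2 where "h2 = \<phi> \<circ> r \<circ> inv_fun \<phi>"
  have b: "bij \<phi>" "bij d" "bij r" using p d r by (simp_all add: isometry_bij)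
  have h: "isometry h1" "isometry h2"
    unfolding h1_def h2_def by (intro isometry_comp p d r isometry_inv)+
  have eq: "\<phi> \<circ> (d \<circ> r \<circ> inv_fun d \<circ> inv_fun r) \<circ> inv_fun \<phi>
      = h1 \<otimes>\<^bsub>OrthGrp\<^esub> h2 \<otimes>\<^bsub>OrthGrp\<^esub> inv\<^bsub>OrthGrp\<^esub> h1 \<otimes>\<^bsub>OrthGrp\<^esub> inv\<^bsub>OrthGrp\<^esub> h2"
    unfolding m_inv_OrthGrp[OF h(1)] m_inv_OrthGrp[OF h(2)]
    unfolding h1_def h2_def inv_conj[OF b(1,2)] inv_conj[OF b(1,3)]
    using b by (simp add: OrthGrp_def fun_eq_iff bij_inv_fun_apply)
  have "h1 \<in> carrier OrthGrp" "h2 \<in> carrier OrthGrp" using h by (simp_all add: OrthGrp_def)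
  then have "h1 \<otimes>\<^bsub>OrthGrp\<^esub> h2 \<otimes>\<^bsub>OrthGrp\<^esub> inv\<^bsub>OrthGrp\<^esub> h1 \<otimes>\<^bsub>OrthGrp\<^esub> inv\<^bsub>OrthGrp\<^esub> h2
      \<in> derived_set OrthGrp (carrier OrthGrp)" by blast
  then show ?thesis unfolding eq Omega_def derived_def by (rule generate.incl)
qed

lemma conj_comp_in_Omega:
  assumes "isometry \<phi>" "\<phi> \<circ> f \<circ> inv_fun \<phi> \<in> Omega" "\<phi> \<circ> g \<circ> inv_fun \<phi> \<in> Omega"
  shows "\<phi> \<circ> (f \<circ> g) \<circ> inv_fun \<phi> \<in> Omega"
proof -
  have "(\<phi> \<circ> f \<circ> inv_fun \<phi>) \<otimes>\<^bsub>OrthGrp\<^esub> (\<phi> \<circ> g \<circ> inv_fun \<phi>) \<in> Omega"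
    using assms(2,3) unfolding Omega_def derived_def by (rule generate.eng)
  moreover have "(\<phi> \<circ> f \<circ> inv_fun \<phi>) \<otimes>\<^bsub>OrthGrp\<^esub> (\<phi> \<circ> g \<circ> inv_fun \<phi>) = \<phi> \<circ> (f \<circ> g) \<circ> inv_fun \<phi>"
    using isometry_bij[OF assms(1)] by (simp add: OrthGrp_def fun_eq_iff bij_inv_fun_apply)
  ultimately show ?thesis by simp
qed

text \<open>For hyperbolic coordinate pairs \<open>(a, a')\<close>, \<open>(b, b')\<close> these are the long root elements and
  the torus elements of the orthogonal group.\<close>

definition root_elt :: "10 \<Rightarrow> 10 \<Rightarrow> 10 \<Rightarrow> 10 \<Rightarrow> 'k::field \<Rightarrow> 'k vect \<Rightarrow> 'k vect" where
  "root_elt a a' b b' s x =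
     (\<lambda>i. if i = a then x a + s * x b else if i = b' then x b' - s * x a' else x i)"

definition torus_elt :: "10 \<Rightarrow> 10 \<Rightarrow> 'k::field \<Rightarrow> 'k vect \<Rightarrow> 'k vect" where
  "torus_elt a a' c x = (\<lambda>i. if i = a then c * x a else if i = a' then inverse c * x a' else x i)"

lemma root_elt_comp:
  "distinct [a, a', b, b'] \<Longrightarrow> root_elt a a' b b' u \<circ> root_elt a a' b b' v = root_elt a a' b b' (u + v)"
  by (auto simp: root_elt_def fun_eq_iff algebra_simps)

lemma root_elt_0: "root_elt a a' b b' 0 = id"
  by (auto simp: root_elt_def fun_eq_iff)

lemma torus_elt_comp: "a \<noteq> a' \<Longrightarrow> torus_elt a a' c \<circ> torus_elt a a' d = torus_elt a a' (c * d)"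
  by (auto simp: torus_elt_def fun_eq_iff algebra_simps)

lemma torus_elt_1: "torus_elt a a' 1 = id"
  by (auto simp: torus_elt_def fun_eq_iff)

lemma root_elt_add: "root_elt a a' b b' s (x + y) = root_elt a a' b b' s x + root_elt a a' b b' s y"
  by (auto simp: root_elt_def fun_eq_iff algebra_simps)

lemma root_elt_smul: "root_elt a a' b b' s (smul c x) = smul c (root_elt a a' b b' s x)"
  by (auto simp: root_elt_def fun_eq_iff algebra_simps)

lemma torus_elt_add: "torus_elt a a' c (x + y) = torus_elt a a' c x + torus_elt a a' c y"
  by (auto simp: torus_elt_def fun_eq_iff algebra_simps)

lemma torus_elt_smul: "torus_elt a a' d (smul c x) = smul c (torus_elt a a' d x)"
  by (auto simp: torus_elt_def fun_eq_iff algebra_simps)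

lemma inv_root_elt:
  "distinct [a, a', b, b'] \<Longrightarrow> inv_fun (root_elt a a' b b' s) = root_elt a a' b b' (- s)"
  by (rule inv_unique_comp) (simp_all add: root_elt_comp root_elt_0)

lemma inv_torus_elt:
  "a \<noteq> a' \<Longrightarrow> c \<noteq> 0 \<Longrightarrow> inv_fun (torus_elt a a' c) = torus_elt a a' (inverse c)"
  by (rule inv_unique_comp) (simp_all add: torus_elt_comp torus_elt_1)

lemma bij_root_elt: "distinct [a, a', b, b'] \<Longrightarrow> bij (root_elt a a' b b' s)"
  by (rule o_bij[of "root_elt a a' b b' (- s)"]) (simp_all add: root_elt_comp root_elt_0)

lemma isometry_root_elt:
  "distinct [a, a', b, b'] \<Longrightarrow> (\<And>x. Qf (root_elt a a' b b' s x) = Qf x) \<Longrightarrow> isometry (root_elt a a' b b' s)"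
  unfolding isometry_def by (simp add: bij_root_elt vadd_eq_plus root_elt_add root_elt_smul)

lemma isometry_torus_elt:
  assumes "a \<noteq> a'" "c \<noteq> 0" "\<And>x. Qf (torus_elt a a' c x) = Qf x"
  shows "isometry (torus_elt a a' c)"
proof -
  have "bij (torus_elt a a' c)"
    by (rule o_bij[of "torus_elt a a' (inverse c)"]) (use assms in \<open>simp_all add: torus_elt_comp torus_elt_1\<close>)
  then show ?thesis unfolding isometry_def using assms(3) by (simp add: vadd_eq_plus torus_elt_add torus_elt_smul)
qed

text \<open>The torus element scales the root subgroup by \<open>c\<close>, so every root element is a commutator
  as soon as the field has an element \<open>c \<notin> {0, 1}\<close>.\<close>

lemma root_elt_eq_commutator:
  fixes s c :: "'k::field"
  assumes "distinct [a, a', b, b']" "c \<noteq> 0" "c \<noteq> 1"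
  defines "u \<equiv> s / (c - 1)"
  shows "root_elt a a' b b' s = torus_elt a a' c \<circ> root_elt a a' b b' u
      \<circ> inv_fun (torus_elt a a' c) \<circ> inv_fun (root_elt a a' b b' u)"
proof -
  have "a \<noteq> a'" using assms(1) by simp
  have "torus_elt a a' c \<circ> root_elt a a' b b' u \<circ> torus_elt a a' (inverse c) = root_elt a a' b b' (c * u)"
    using assms(1,2) by (auto simp: root_elt_def torus_elt_def fun_eq_iff algebra_simps)
  then have "torus_elt a a' c \<circ> root_elt a a' b b' u \<circ> inv_fun (torus_elt a a' c)
      \<circ> inv_fun (root_elt a a' b b' u) = root_elt a a' b b' (c * u + - u)"
    unfolding inv_root_elt[OF assms(1)] inv_torus_elt[OF \<open>a \<noteq> a'\<close> assms(2)]
    by (simp only: root_elt_comp[OF assms(1)])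
  also have "c * u + - u = (c - 1) * u" by (simp add: algebra_simps)
  also have "\<dots> = s" using assms(3) by (simp add: u_def)
  finally show ?thesis by (rule sym)
qed

lemma conj_root_elt_in_Omega:
  fixes c :: "'k::field" and \<phi> :: "'k vect \<Rightarrow> 'k vect"
  assumes d: "distinct [a, a', b, b']" and c: "c \<noteq> 0" "c \<noteq> 1" and p: "isometry \<phi>"
    and q: "\<And>(s::'k) x. Qf (root_elt a a' b b' s x) = Qf x"
    and qt: "\<And>(d::'k) x. d \<noteq> 0 \<Longrightarrow> Qf (torus_elt a a' d x) = Qf x"
  shows "\<phi> \<circ> root_elt a a' b b' s \<circ> inv_fun \<phi> \<in> Omega"
proof -
  have "a \<noteq> a'" using d by simp
  then show ?thesis
    unfolding root_elt_eq_commutator[OF d c, of s]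
    by (rule conj_commutator_in_Omega[OF p isometry_torus_elt isometry_root_elt[OF d q]]) (use c qt in auto)
qed

section \<open>The matrices \<open>M1\<close> and \<open>M2\<close>\<close>

definition M1 :: "'k::field \<Rightarrow> 'k vect \<Rightarrow> 'k vect" where
  "M1 t = root_elt 0 1 6 7 (-1) \<circ> root_elt 0 1 7 6 t \<circ> root_elt 0 1 2 3 1 \<circ> root_elt 3 2 8 9 (-1)"

definition M2 :: "'k::field vect \<Rightarrow> 'k vect" where
  "M2 = root_elt 6 7 3 2 (-1) \<circ> root_elt 2 3 5 4 1"

lemma M1_apply: "M1 t x = (\<lambda>i. if i = 0 then x 0 + t * x 1 + x 2 - x 6 + t * x 7
    else if i = 3 then x 3 - x 1 - x 8 else if i = 6 then x 6 - t * x 1 else if i = 7 then x 7 + x 1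
    else if i = 9 then x 9 + x 2 else x i)"
  using ten_cases by (auto simp: fun_eq_iff M1_def root_elt_def algebra_simps)

lemma M2_apply:
  "M2 x = (\<lambda>i. if i = 2 then x 2 + x 5 + x 7 else if i = 4 then x 4 - x 3 else if i = 6 then x 6 - x 3 else x i)"
  using ten_cases by (auto simp: fun_eq_iff M2_def root_elt_def algebra_simps)

lemma M1_smul: "M1 t (smul c x) = smul c (M1 t x)"
  by (simp add: M1_def root_elt_smul)

lemma M2_smul: "M2 (smul c x) = smul c (M2 x)"
  by (simp add: M2_def root_elt_smul)

lemma bij_M1: "bij (M1 t)"
  unfolding M1_def by (intro bij_comp bij_root_elt) simp_all

lemma bij_M2: "bij M2"
  unfolding M2_def by (intro bij_comp bij_root_elt) simp_all

definition M1_col_support :: "10 \<Rightarrow> 10 set" where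
  "M1_col_support k = (if k = 0 then {0} else if k = 1 then {0,1,3,6,7} else if k = 2 then {0,2,9}
     else if k = 3 then {3} else if k = 4 then {4} else if k = 5 then {5} else if k = 6 then {0,6}
     else if k = 7 then {0,7} else if k = 8 then {3,8} else {9})"

definition M2_col_support :: "10 \<Rightarrow> 10 set" where
  "M2_col_support k = (if k = 0 then {0} else if k = 1 then {1} else if k = 2 then {2}
     else if k = 3 then {3,4,6} else if k = 4 then {4} else if k = 5 then {2,5} else if k = 6 then {6}
     else if k = 7 then {2,7} else if k = 8 then {8} else {9})"

lemma coord_support_M1_col: "t \<noteq> 0 \<Longrightarrow> coord_support (M1 t (unit_vec k)) = M1_col_support k"
  unfolding coord_support_def
  by (rule Set.set_eqI) (use ten_cases[of k] in \<open>auto simp: M1_apply unit_vec_def M1_col_support_def\<close>)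

lemma coord_support_M2_col: "coord_support (M2 (unit_vec k) :: 'k::field vect) = M2_col_support k"
  unfolding coord_support_def
  by (rule Set.set_eqI) (use ten_cases[of k] in \<open>auto simp: M2_apply unit_vec_def M2_col_support_def\<close>)

lemma M1_entries:
  "M1 t (unit_vec 1) 1 = 1" "M1 t (unit_vec 1) 3 = -1" "M1 t (unit_vec 1) 7 = 1" "M1 t (unit_vec 1) 0 = t"
  "M1 t (unit_vec 2) 0 = 1" "M1 t (unit_vec 2) 2 = 1" "M1 t (unit_vec 2) 9 = 1"
  "M1 t (unit_vec 6) 0 = -1" "M1 t (unit_vec 6) 6 = 1" "M1 t (unit_vec 8) 3 = -1" "M1 t (unit_vec 8) 8 = 1"
  by (simp_all add: M1_apply unit_vec_def)

lemma M2_entries: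
  "M2 (unit_vec 3) 3 = 1" "M2 (unit_vec 3) 4 = -1" "M2 (unit_vec 3) 6 = -1"
  "M2 (unit_vec 5) 2 = 1" "M2 (unit_vec 5) 5 = 1" "M2 (unit_vec 7) 2 = 1" "M2 (unit_vec 7) 7 = 1"
  by (simp_all add: M2_apply unit_vec_def)

lemma Qf_root_elt:
  "Qf (root_elt 0 1 6 7 s x) = Qf x" "Qf (root_elt 0 1 7 6 s x) = Qf x" "Qf (root_elt 0 1 2 3 s x) = Qf x"
  "Qf (root_elt 3 2 8 9 s x) = Qf x" "Qf (root_elt 6 7 3 2 s x) = Qf x" "Qf (root_elt 2 3 5 4 s x) = Qf x"
  by (simp_all add: Qf_eq root_elt_def algebra_simps)

lemma Qf_torus_elt:
  "c \<noteq> 0 \<Longrightarrow> Qf (torus_elt 0 1 c x) = Qf x" "c \<noteq> 0 \<Longrightarrow> Qf (torus_elt 3 2 c x) = Qf x"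
  "c \<noteq> 0 \<Longrightarrow> Qf (torus_elt 6 7 c x) = Qf x" "c \<noteq> 0 \<Longrightarrow> Qf (torus_elt 2 3 c x) = Qf x"
  by (simp_all add: Qf_eq torus_elt_def algebra_simps)

lemma conj_M1_in_Omega:
  fixes t c :: "'k::field"
  assumes "c \<noteq> 0" "c \<noteq> 1" "isometry \<phi>"
  shows "\<phi> \<circ> M1 t \<circ> inv_fun \<phi> \<in> Omega"
  unfolding M1_def
  by (intro conj_comp_in_Omega[OF assms(3)] conj_root_elt_in_Omega[OF _ assms] Qf_root_elt Qf_torus_elt)
    simp_all

lemma conj_M2_in_Omega:
  fixes c :: "'k::field"
  assumes "c \<noteq> 0" "c \<noteq> 1" "isometry (\<phi> :: 'k vect \<Rightarrow> 'k vect)"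
  shows "\<phi> \<circ> M2 \<circ> inv_fun \<phi> \<in> Omega"
  unfolding M2_def
  by (intro conj_comp_in_Omega[OF assms(3)] conj_root_elt_in_Omega[OF _ assms] Qf_root_elt Qf_torus_elt)
    simp_all

lemma image_Union_card_class:
  fixes C :: "'a \<Rightarrow> 'b set"
  assumes "inj \<tau>" "\<And>k. \<tau> ` C k = C (\<pi> k)" "\<And>k. k \<in> K \<longleftrightarrow> card (C k) = w"
  shows "\<tau> ` (\<Union>k\<in>K. C k) \<subseteq> (\<Union>k\<in>K. C k)"
proof
  fix y assume "y \<in> \<tau> ` (\<Union>k\<in>K. C k)"
  then obtain x k where xk: "k \<in> K" "x \<in> C k" "y = \<tau> x" by auto
  have "card (C (\<pi> k)) = card (C k)"
    using assms(1,2) by (metis card_image inj_on_subset subset_UNIV)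
  then have "\<pi> k \<in> K" using assms(3) xk(1) by simp
  moreover have "y \<in> C (\<pi> k)" using xk assms(2) by blast
  ultimately show "y \<in> (\<Union>k\<in>K. C k)" by blast
qed

lemma inj_invariant_iff:
  fixes \<tau> :: "'a::finite \<Rightarrow> 'a"
  assumes "inj \<tau>" "\<tau> ` S \<subseteq> S"
  shows "\<tau> j \<in> S \<longleftrightarrow> j \<in> S"
proof -
  have "\<tau> ` S = S" using endo_inj_surj[OF _ assms(2)] assms(1) by (simp add: inj_on_subset)
  then show ?thesis using assms(1) by (metis inj_image_mem_iff)
qed

lemma col_support_unions_separate_points:
  fixes i i' :: 10
  assumes "i \<in> {0,3,4,5,9} \<longleftrightarrow> i' \<in> {0,3,4,5,9}" "i \<in> {0,1,3,6,7} \<longleftrightarrow> i' \<in> {0,1,3,6,7}"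
    "i \<in> {0,2,9} \<longleftrightarrow> i' \<in> {0,2,9}" "i \<in> {0,3,6,7,8} \<longleftrightarrow> i' \<in> {0,3,6,7,8}"
    "i \<in> {0,1,2,4,6,8,9} \<longleftrightarrow> i' \<in> {0,1,2,4,6,8,9}" "i \<in> {3,4,6} \<longleftrightarrow> i' \<in> {3,4,6}"
    "i \<in> {2,5,7} \<longleftrightarrow> i' \<in> {2,5,7}"
  shows "i = i'"
  using ten_cases[of i] ten_cases[of i'] assms by (elim disjE) simp_all

lemma M_col_supports_rigid:
  assumes "inj \<tau>" "\<And>k. \<tau> ` M1_col_support k = M1_col_support (\<pi>1 k)"
    "\<And>k. \<tau> ` M2_col_support k = M2_col_support (\<pi>2 k)"
  shows "\<tau> = id"
proof -
  txt \<open>\<open>\<tau>\<close> permutes the columns with supports of a given size, so the union of these supports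
    is \<open>\<tau>\<close>-invariant; these unions separate the points.\<close>
  note M1_class = image_Union_card_class[where C = M1_col_support and \<pi> = \<pi>1, OF assms(1,2)]
  note M2_class = image_Union_card_class[where C = M2_col_support and \<pi> = \<pi>2, OF assms(1,3)]
  have M1_singletons: "\<tau> ` (\<Union>k\<in>{0,3,4,5,9}. M1_col_support k) \<subseteq> (\<Union>k\<in>{0,3,4,5,9}. M1_col_support k)"
    by (rule M1_class[where w = 1]) (use ten_cases in \<open>auto simp: M1_col_support_def\<close>)
  have M1_size5: "\<tau> ` (\<Union>k\<in>{1}. M1_col_support k) \<subseteq> (\<Union>k\<in>{1}. M1_col_support k)"
    by (rule M1_class[where w = 5]) (use ten_cases in \<open>auto simp: M1_col_support_def\<close>)
  have M1_size3: "\<tau> ` (\<Union>k\<in>{2}. M1_col_support k) \<subseteq> (\<Union>k\<in>{2}. M1_col_support k)"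
    by (rule M1_class[where w = 3]) (use ten_cases in \<open>auto simp: M1_col_support_def\<close>)
  have M1_size2: "\<tau> ` (\<Union>k\<in>{6,7,8}. M1_col_support k) \<subseteq> (\<Union>k\<in>{6,7,8}. M1_col_support k)"
    by (rule M1_class[where w = 2]) (use ten_cases in \<open>auto simp: M1_col_support_def\<close>)
  have M2_singletons: "\<tau> ` (\<Union>k\<in>{0,1,2,4,6,8,9}. M2_col_support k) \<subseteq> (\<Union>k\<in>{0,1,2,4,6,8,9}. M2_col_support k)"
    by (rule M2_class[where w = 1]) (use ten_cases in \<open>auto simp: M2_col_support_def\<close>)
  have M2_size3: "\<tau> ` (\<Union>k\<in>{3}. M2_col_support k) \<subseteq> (\<Union>k\<in>{3}. M2_col_support k)"
    by (rule M2_class[where w = 3]) (use ten_cases in \<open>auto simp: M2_col_support_def\<close>)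
  have M2_size2: "\<tau> ` (\<Union>k\<in>{5,7}. M2_col_support k) \<subseteq> (\<Union>k\<in>{5,7}. M2_col_support k)"
    by (rule M2_class[where w = 2]) (use ten_cases in \<open>auto simp: M2_col_support_def\<close>)
  have unions: "(\<Union>k\<in>{0,3,4,5,9}. M1_col_support k) = {0,3,4,5,9}"
    "(\<Union>k\<in>{1}. M1_col_support k) = {0,1,3,6,7}" "(\<Union>k\<in>{2}. M1_col_support k) = {0,2,9}"
    "(\<Union>k\<in>{6,7,8}. M1_col_support k) = {0,3,6,7,8}"
    "(\<Union>k\<in>{0,1,2,4,6,8,9}. M2_col_support k) = {0,1,2,4,6,8,9}"
    "(\<Union>k\<in>{3}. M2_col_support k) = {3,4,6}" "(\<Union>k\<in>{5,7}. M2_col_support k) = {2,5,7}"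
    by (auto simp: M1_col_support_def M2_col_support_def)
  show "\<tau> = id"
  proof
    fix j
    note invariant = inj_invariant_iff[OF assms(1)]
    show "\<tau> j = id j"
      using col_support_unions_separate_points[of "\<tau> j" j]
        invariant[OF M1_singletons[unfolded unions]] invariant[OF M1_size5[unfolded unions]]
        invariant[OF M1_size3[unfolded unions]] invariant[OF M1_size2[unfolded unions]]
        invariant[OF M2_singletons[unfolded unions]] invariant[OF M2_size3[unfolded unions]]
        invariant[OF M2_size2[unfolded unions]]
      by simp
  qed
qed

text \<open>The relation \<open>j \<in> C k\<close> is antisymmetric for both families of column supports.\<close>

lemma inj_M1_col_support: "inj M1_col_support"
proof (rule injI)
  fix j k assume "M1_col_support j = M1_col_support k"
  moreover have "k \<in> M1_col_support k" "j \<in> M1_col_support j"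
    using ten_cases[of k] ten_cases[of j] by (auto simp: M1_col_support_def)
  ultimately have "j \<in> M1_col_support k" "k \<in> M1_col_support j" by simp_all
  then show "j = k"
    using ten_cases[of j] ten_cases[of k] by (elim disjE) (simp_all add: M1_col_support_def)
qed

lemma inj_M2_col_support: "inj M2_col_support"
proof (rule injI)
  fix j k assume "M2_col_support j = M2_col_support k"
  moreover have "k \<in> M2_col_support k" "j \<in> M2_col_support j"
    using ten_cases[of k] ten_cases[of j] by (auto simp: M2_col_support_def)
  ultimately have "j \<in> M2_col_support k" "k \<in> M2_col_support j" by simp_all
  then show "j = k"
    using ten_cases[of j] ten_cases[of k] by (elim disjE) (simp_all add: M2_col_support_def)
qed

lemma M1_M2_entries_force_scalar:
  assumes s: "field_aut s" and a0: "a 0 \<noteq> 0"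
    and E1: "\<And>j q. a j * s (M1 t (unit_vec q) j) = b1 q * M1 t (unit_vec q) j"
    and E2: "\<And>j q. a j * s (M2 (unit_vec q) j) = b2 q * M2 (unit_vec q) j"
  shows "a j = a 0" and "s t = t"
proof -
  have s1: "s 1 = 1" "s (-1) = -1" using field_aut_1[OF s] field_aut_uminus[OF s, of 1] by simp_all
  have col1: "a 1 = b1 1" "a 3 = b1 1" "a 7 = b1 1" "a 0 * s t = b1 1 * t"
    using E1[of 1 1] E1[of 3 1] E1[of 7 1] E1[of 0 1] by (simp_all add: M1_entries s1)
  have col2: "a 0 = b1 2" "a 2 = b1 2" "a 9 = b1 2"
    using E1[of 0 2] E1[of 2 2] E1[of 9 2] by (simp_all add: M1_entries s1)
  have col6_8: "a 0 = b1 6" "a 6 = b1 6" "a 3 = b1 8" "a 8 = b1 8"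
    using E1[of 0 6] E1[of 6 6] E1[of 3 8] E1[of 8 8] by (simp_all add: M1_entries s1)
  have col3_5_7: "a 3 = b2 3" "a 4 = b2 3" "a 6 = b2 3" "a 2 = b2 5" "a 5 = b2 5" "a 7 = b2 7"
    using E2[of 3 3] E2[of 4 3] E2[of 6 3] E2[of 2 5] E2[of 5 5] E2[of 7 7] by (simp_all add: M2_entries s1)
  have same: "a 1 = a 0" "a 2 = a 0" "a 3 = a 0" "a 4 = a 0" "a 5 = a 0" "a 6 = a 0" "a 7 = a 0"
    "a 8 = a 0" "a 9 = a 0"
    using col1 col2 col6_8 col3_5_7 by simp_all
  then show "a j = a 0" using ten_cases[of j] by auto
  show "s t = t" using col1(1,4) same(1) a0 by simp
qed

lemma monomial_commuting_M1_M2_scalar: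
  assumes h: "field_aut s" "semilinear h s" "monomial h a \<tau>"
    and k1: "monomial k1 b1 \<pi>1" "h \<circ> M1 t = M1 t \<circ> k1"
    and k2: "monomial k2 b2 \<pi>2" "h \<circ> M2 = M2 \<circ> k2"
    and t: "t \<noteq> 0" "\<And>x. x \<noteq> 0 \<Longrightarrow> \<exists>n. x = t ^ n"
  shows "h = smul (a 0)"
proof -
  have s0: "\<And>c. s c = 0 \<longleftrightarrow> c = 0" using field_aut_eq_0_iff[OF h(1)] .
  note I1 = monomial_intertwining[OF h(2,3) s0 k1(1) M1_smul k1(2)]
  note I2 = monomial_intertwining[OF h(2,3) s0 k2(1) M2_smul k2(2)]
  have "\<tau> = id"
    using M_col_supports_rigid[of \<tau> \<pi>1 \<pi>2] h(3) I1(2) I2(2)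
    by (simp add: monomial_def coord_support_M1_col[OF t(1)] coord_support_M2_col)
  then have h_apply: "h y j = a j * s (y j)" for y j using monomial_apply[OF h(2,3), of y j] by simp
  have "\<pi>1 = id" "\<pi>2 = id"
    using I1(2) I2(2) inj_M1_col_support inj_M2_col_support \<open>\<tau> = id\<close>
    by (simp_all add: fun_eq_iff coord_support_M1_col[OF t(1)] coord_support_M2_col inj_eq)
  then have E1: "a j * s (M1 t (unit_vec q) j) = b1 q * M1 t (unit_vec q) j"
    and E2: "a j * s (M2 (unit_vec q) j) = b2 q * M2 (unit_vec q) j" for q j
    using I1(1)[of q] I2(1)[of q] h_apply by (simp_all add: fun_eq_iff)
  have "a 0 \<noteq> 0" using h(3) by (simp add: monomial_def)
  note entries = M1_M2_entries_force_scalar[OF h(1) this E1 E2]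
  have "s x = x" for x by (rule field_aut_fixing_primitive_element[OF h(1) entries(2) t(2)])
  then show ?thesis using h_apply entries(1) by (simp add: fun_eq_iff)
qed

section \<open>Subgroups of \<open>\<Gamma>O\<close>\<close>

lemma bij_inv_eq_funpow:
  fixes g :: "'a::finite \<Rightarrow> 'a"
  assumes "bij g"
  obtains n where "inv_fun g = g ^^ n"
proof -
  have "permutation g" using assms by (simp add: permutation)
  then obtain n where n: "g ^^ n = id" "n > 0" by (rule permutation_is_nilpotent)
  then have "g \<circ> g ^^ (n - 1) = id" "g ^^ (n - 1) \<circ> g = id"
    by (metis Suc_diff_1 funpow.simps(2) funpow_Suc_right)+
  then show ?thesis using that inv_unique_comp by blast
qed

context
  fixes Gh :: "('k::{field,finite} vect \<Rightarrow> 'k vect) set"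
  assumes Gh: "subgroup Gh GammaO"
begin

lemma subgroup_GammaO_bij: "g \<in> Gh \<Longrightarrow> bij g"
  using subgroup.subset[OF Gh] by (auto simp: GammaO_def semisim_def)

lemma subgroup_GammaO_comp: "g \<in> Gh \<Longrightarrow> h \<in> Gh \<Longrightarrow> g \<circ> h \<in> Gh"
  using subgroup.m_closed[OF Gh] by (simp add: GammaO_def)

lemma subgroup_GammaO_id: "id \<in> Gh"
  using subgroup.one_closed[OF Gh] by (simp add: GammaO_def)

lemma subgroup_GammaO_inv_fun: "g \<in> Gh \<Longrightarrow> inv_fun g \<in> Gh"
proof -
  assume g: "g \<in> Gh"
  have "g ^^ n \<in> Gh" for n
    by (induction n) (simp_all only: funpow.simps subgroup_GammaO_id subgroup_GammaO_comp g)
  then show ?thesis using bij_inv_eq_funpow[OF subgroup_GammaO_bij[OF g]] by metis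
qed

lemma decomp_stab_semisim:
  assumes "k \<in> decomp_stab Gh D" shows "semisim k" "\<forall>W\<in>D. k ` W \<in> D"
  using assms subgroup.subset[OF Gh] by (auto simp: decomp_stab_def GammaO_def)

lemma m_inv_subgroup_GammaO: "g \<in> Gh \<Longrightarrow> inv\<^bsub>GammaO\<lparr>carrier := Gh\<rparr>\<^esub> g = inv_fun g"
  by (rule m_inv_fun_monoid) (simp_all add: subgroup_GammaO_bij subgroup_GammaO_inv_fun GammaO_def)

lemma conjg_subgroup_GammaO:
  assumes "g \<in> Gh" shows "conjg (GammaO\<lparr>carrier := Gh\<rparr>) H g = {inv_fun g \<circ> h \<circ> g | h. h \<in> H}"
  unfolding conjg_def m_inv_subgroup_GammaO[OF assms] by (simp add: GammaO_def)

lemma Scalars_subset_core: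
  assumes "Scalars \<subseteq> Gh" and D: "\<And>W. W \<in> D \<Longrightarrow> two_space W"
  shows "Scalars \<subseteq> core (GammaO\<lparr>carrier := Gh\<rparr>) (decomp_stab Gh D)"
proof
  fix z assume z: "z \<in> (Scalars :: ('k vect \<Rightarrow> 'k vect) set)"
  then obtain c where c: "c \<noteq> 0" "z = smul c" by (auto simp: Scalars_def)
  have zG: "z \<in> Gh" using z assms(1) by blast
  have "z \<in> conjg (GammaO\<lparr>carrier := Gh\<rparr>) (decomp_stab Gh D) g" if g: "g \<in> Gh" for g
  proof -
    obtain s where s: "field_aut s" and sm: "\<And>c x. g (smul c x) = smul (s c) (g x)"
      using subgroup.subset[OF Gh] g by (auto simp: GammaO_def semisim_def)
    have b: "bij g" by (rule subgroup_GammaO_bij[OF g])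
    txt \<open>Conjugation by a semisimilarity with automorphism \<open>s\<close> sends the scalar \<open>c\<close> to \<open>s c\<close>.\<close>
    have k: "g \<circ> z \<circ> inv_fun g = smul (s c)"
      unfolding c(2) using b by (simp add: fun_eq_iff sm bij_inv_fun_apply del: smul_apply)
    have "s c \<noteq> 0" using field_aut_eq_0_iff[OF s] c(1) by simp
    then have "g \<circ> z \<circ> inv_fun g \<in> decomp_stab Gh D"
      unfolding decomp_stab_def
      using k subgroup_GammaO_comp[OF subgroup_GammaO_comp[OF g zG] subgroup_GammaO_inv_fun[OF g]]
        two_space_smul_image[OF D] by simp
    moreover have "z = inv_fun g \<circ> (g \<circ> z \<circ> inv_fun g) \<circ> g"
      using b by (simp add: fun_eq_iff bij_inv_fun_apply)
    ultimately show ?thesis unfolding conjg_subgroup_GammaO[OF g] by blast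
  qed
  then show "z \<in> core (GammaO\<lparr>carrier := Gh\<rparr>) (decomp_stab Gh D)"
    unfolding core_def using zG by simp
qed

end

lemma plus_decomp_two_space: "plus_decomp D \<Longrightarrow> W \<in> D \<Longrightarrow> two_space W"
  by (simp add: plus_decomp_def plus_type_2space_def)

lemma base_size_le_card:
  assumes "S \<subseteq> carrier G" "finite S" "carrier G \<inter> (\<Inter>g\<in>S. conjg G H g) \<subseteq> core G H"
  shows "base_size G H \<le> card S"
proof -
  have "carrier G \<inter> (\<Inter>g\<in>S. conjg G H g) = core G H"
    using assms(1,3) unfolding core_def by auto
  then show ?thesis unfolding base_size_def using assms(1,2) by (intro Least_le) blast
qed

section \<open>The hyperbolic frame\<close>

locale hyperbolic_frame =
  fixes D :: "'k::{field,finite} vect set set" and \<nu> :: "nat \<Rightarrow> 'k vect set" and e f :: "nat \<Rightarrow> 'k vect"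
  assumes bij: "bij_betw \<nu> {..<5} D"
    and orth: "\<And>W W' x y. W \<in> D \<Longrightarrow> W' \<in> D \<Longrightarrow> W \<noteq> W' \<Longrightarrow> x \<in> W \<Longrightarrow> y \<in> W' \<Longrightarrow> Bf x y = 0"
    and two_space: "\<And>W. W \<in> D \<Longrightarrow> two_space W"
    and hyperbolic: "\<And>i. i < 5 \<Longrightarrow> e i \<in> \<nu> i \<and> f i \<in> \<nu> i \<and> Qf (e i) = 0 \<and> Qf (f i) = 0 \<and> Bf (e i) (f i) = 1"
begin

lemma \<nu>_in_D: "i < 5 \<Longrightarrow> \<nu> i \<in> D"
  using bij_betwE[OF bij] by simp

lemma \<nu>_cases: assumes "W \<in> D" obtains j where "j < 5" "W = \<nu> j"
  using bij_betw_imp_surj_on[OF bij] assms by (auto simp: image_iff)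

lemma Bf_\<nu>_orth:
  assumes "i < 5" "j < 5" "i \<noteq> j" "x \<in> \<nu> i" "y \<in> \<nu> j" shows "Bf x y = 0"
proof -
  have "\<nu> i \<noteq> \<nu> j" using bij_betw_imp_inj_on[OF bij] assms(1-3) by (auto simp: inj_on_def)
  then show ?thesis using orth \<nu>_in_D assms by blast
qed

lemma Bf_e_e: "i < 5 \<Longrightarrow> j < 5 \<Longrightarrow> Bf (e i) (e j) = 0"
  using hyperbolic[of i] hyperbolic[of j] Bf_\<nu>_orth[of i j "e i" "e j"] by (cases "i = j") (auto simp: Bf_self)

lemma Bf_f_f: "i < 5 \<Longrightarrow> j < 5 \<Longrightarrow> Bf (f i) (f j) = 0"
  using hyperbolic[of i] hyperbolic[of j] Bf_\<nu>_orth[of i j "f i" "f j"] by (cases "i = j") (auto simp: Bf_self)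

lemma Bf_e_f: "i < 5 \<Longrightarrow> j < 5 \<Longrightarrow> Bf (e i) (f j) = (if i = j then 1 else 0)"
  using hyperbolic[of i] hyperbolic[of j] Bf_\<nu>_orth[of i j "e i" "f j"] by auto

lemma Bf_f_e: "i < 5 \<Longrightarrow> j < 5 \<Longrightarrow> Bf (f i) (e j) = (if i = j then 1 else 0)"
  using Bf_e_f[of j i] by (simp add: Bf_commute eq_commute)

definition frame :: "'k vect \<Rightarrow> 'k vect" where
  "frame x = (\<Sum>i<5. smul (x (ecoord i)) (e i) + smul (x (fcoord i)) (f i))"

lemma frame_apply: "frame x p = (\<Sum>i<5. x (ecoord i) * e i p + x (fcoord i) * f i p)"
  unfolding frame_def by (simp add: sum_fun_apply)

lemma frame_add: "frame (x + y) = frame x + frame y"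
  by (simp add: fun_eq_iff frame_apply sum.distrib[symmetric] algebra_simps)

lemma frame_smul: "frame (smul c x) = smul c (frame x)"
  by (simp add: fun_eq_iff frame_apply sum_distrib_left algebra_simps)

lemma Bf_frame:
  assumes "j < 5" shows "Bf (frame x) (f j) = x (ecoord j)" "Bf (frame x) (e j) = x (fcoord j)"
proof -
  have "Bf (frame x) (f j) = (\<Sum>i<5. if i = j then x (ecoord i) else 0)"
    unfolding frame_def Bf_sum_left Bf_add_left Bf_smul_left
    by (rule sum.cong) (use assms in \<open>auto simp: Bf_e_f Bf_f_f\<close>)
  then show "Bf (frame x) (f j) = x (ecoord j)" using assms by simp
  have "Bf (frame x) (e j) = (\<Sum>i<5. if i = j then x (fcoord i) else 0)"
    unfolding frame_def Bf_sum_left Bf_add_left Bf_smul_left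
    by (rule sum.cong) (use assms in \<open>auto simp: Bf_f_e Bf_e_e\<close>)
  then show "Bf (frame x) (e j) = x (fcoord j)" using assms by simp
qed

lemma bij_frame: "bij frame"
proof -
  have "inj frame"
    by (rule injI, rule vec_eq_by_coord_pairs) (metis Bf_frame)
  then show ?thesis by (simp add: bij_def finite_UNIV_inj_surj)
qed

lemma Qf_frame: "Qf (frame x) = Qf x"
proof -
  define w where "w i = smul (x (ecoord i)) (e i) + smul (x (fcoord i)) (f i)" for i
  have w: "i < 5 \<Longrightarrow> w i \<in> \<nu> i" for i
    using hyperbolic[of i] two_space[OF \<nu>_in_D[of i]] two_space_closed unfolding w_def by blast
  have "Qf (frame x) = (\<Sum>i<5. Qf (w i))"
    unfolding frame_def w_def[symmetric] by (rule Qf_sum_orthogonal) (use w Bf_\<nu>_orth in auto)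
  also have "\<dots> = (\<Sum>i<5. x (ecoord i) * x (fcoord i))"
    by (rule sum.cong) (use hyperbolic in \<open>simp_all add: w_def Qf_add Qf_smul Bf_smul_left Bf_smul_right\<close>)
  finally show ?thesis by (simp add: Qf_eq_sum_coord_pairs)
qed

lemma isometry_frame: "isometry frame"
  unfolding isometry_def using bij_frame frame_add frame_smul Qf_frame by (simp add: vadd_eq_plus)

lemma frame_unit_vec: assumes "i < 5" shows "frame (unit_vec (ecoord i)) = e i" "frame (unit_vec (fcoord i)) = f i"
proof -
  have "frame (unit_vec (ecoord i)) p = (\<Sum>i'<5. if i' = i then e i' p else 0)" for p
    unfolding frame_apply by (rule sum.cong) (use assms in \<open>auto simp: unit_vec_def ecoord_eq_iff fcoord_neq_ecoord\<close>)
  then show "frame (unit_vec (ecoord i)) = e i" using assms by (simp add: fun_eq_iff)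
  have "frame (unit_vec (fcoord i)) p = (\<Sum>i'<5. if i' = i then f i' p else 0)" for p
    unfolding frame_apply by (rule sum.cong)
      (use assms in \<open>auto simp: unit_vec_def fcoord_eq_iff ecoord_neq_fcoord\<close>)
  then show "frame (unit_vec (fcoord i)) = f i" using assms by (simp add: fun_eq_iff)
qed

lemma inv_frame_coords_vanish:
  assumes "j < 5" "w \<in> \<nu> j" "i < 5" "i \<noteq> j"
  shows "inv_fun frame w (ecoord i) = 0" "inv_fun frame w (fcoord i) = 0"
  using Bf_frame[OF assms(3), of "inv_fun frame w"] hyperbolic[OF assms(3)]
    Bf_\<nu>_orth[OF assms(1,3) assms(4)[symmetric] assms(2)]
  by (simp_all add: bij_inv_fun_apply bij_frame)

text \<open>A semisimilarity stabilising \<open>D\<close> maps singular vectors of a plane of \<open>D\<close> to singular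
  vectors of a plane of \<open>D\<close>, and the singular vectors of \<open>\<nu> j\<close> are the multiples of \<open>e j\<close> and
  of \<open>f j\<close>.\<close>

lemma stabiliser_conj_unit_vec:
  assumes k: "semisim k" "\<forall>W\<in>D. k ` W \<in> D"
  shows "\<exists>c p. c \<noteq> 0 \<and> (inv_fun frame \<circ> k \<circ> frame) (unit_vec q) = smul c (unit_vec p)"
proof -
  let ?kt = "inv_fun frame \<circ> k \<circ> frame"
  obtain s lam where s: "field_aut s" and kt_Q: "Qf (?kt (unit_vec q)) = lam * s (Qf (unit_vec q))"
    and kt: "bij ?kt" "\<And>x y. ?kt (vadd x y) = vadd (?kt x) (?kt y)"
    using semisim_conj[OF k(1) isometry_frame] unfolding semisim_def by blast
  obtain i where i: "i < 5" "q = ecoord i \<or> q = fcoord i" by (rule coord_pair_cases)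
  have e_f: "frame (unit_vec q) \<in> \<nu> i" "Qf (frame (unit_vec q)) = 0"
    using i frame_unit_vec[OF i(1)] hyperbolic[OF i(1)] by auto
  obtain j where j: "j < 5" "k ` \<nu> i = \<nu> j" using \<nu>_cases k(2) \<nu>_in_D[OF i(1)] by metis
  have "k (frame (unit_vec q)) \<in> \<nu> j" using e_f(1) j(2) by blast
  then have "\<And>i'. i' < 5 \<Longrightarrow> i' \<noteq> j \<Longrightarrow> ?kt (unit_vec q) (ecoord i') = 0 \<and> ?kt (unit_vec q) (fcoord i') = 0"
    using inv_frame_coords_vanish[OF j(1)] by simp
  moreover have "Qf (?kt (unit_vec q)) = 0" using kt_Q e_f(2) Qf_frame field_aut_0[OF s] by simp
  moreover have "?kt (unit_vec q) \<noteq> 0"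
  proof
    assume "?kt (unit_vec q) = 0"
    then have "?kt (unit_vec q) = ?kt 0" using kt(2)[of 0 0] by (simp add: vadd_eq_plus)
    then show False using bij_is_inj[OF kt(1)] unit_vec_neq_zero by (metis injD)
  qed
  ultimately show ?thesis by (rule singular_vec_on_coord_pair[OF j(1)])
qed

lemma stabiliser_conj_monomial:
  assumes k: "semisim k" "\<forall>W\<in>D. k ` W \<in> D"
  obtains s a \<tau> where "field_aut s" "semilinear (inv_fun frame \<circ> k \<circ> frame) s"
    "monomial (inv_fun frame \<circ> k \<circ> frame) a \<tau>"
proof -
  let ?kt = "inv_fun frame \<circ> k \<circ> frame"
  obtain s where s: "field_aut s" and kt: "bij ?kt" "semilinear ?kt s"
    using semisim_conj[OF k(1) isometry_frame] unfolding semisim_def semilinear_def vadd_eq_plus by blast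
  have "\<forall>q. \<exists>cp. fst cp \<noteq> 0 \<and> ?kt (unit_vec q) = smul (fst cp) (unit_vec (snd cp))"
    using stabiliser_conj_unit_vec[OF k] by simp
  then obtain F where F: "\<forall>q. fst (F q) \<noteq> 0 \<and> ?kt (unit_vec q) = smul (fst (F q)) (unit_vec (snd (F q)))"
    by (rule choice[THEN exE])
  define a where "a q = fst (F q)" for q
  define \<tau> where "\<tau> q = snd (F q)" for q
  have a: "\<And>q. a q \<noteq> 0" and kt_unit: "\<And>q. ?kt (unit_vec q) = smul (a q) (unit_vec (\<tau> q))"
    using F by (simp_all add: a_def \<tau>_def)
  have "inj \<tau>"
    using monomial_perm_inj[OF bij_is_inj[OF kt(1)] kt(2) _ a kt_unit] s
    by (simp add: field_aut_def bij_is_surj)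
  then show ?thesis using that s kt(2) a kt_unit unfolding monomial_def by blast
qed

lemma conj_stabiliser_intertwining:
  assumes Gh: "subgroup Gh GammaO" and g: "frame \<circ> M \<circ> inv_fun frame \<in> Gh" and M: "bij M"
    and h: "h \<in> conjg (GammaO\<lparr>carrier := Gh\<rparr>) H (inv_fun (frame \<circ> M \<circ> inv_fun frame))"
  obtains k where "k \<in> H" "(inv_fun frame \<circ> h \<circ> frame) \<circ> M = M \<circ> (inv_fun frame \<circ> k \<circ> frame)"
proof -
  let ?g = "frame \<circ> M \<circ> inv_fun frame"
  have "bij ?g" using M bij_frame by (simp add: bij_comp bij_imp_bij_inv)
  then obtain k where k: "k \<in> H" and h_eq: "h = ?g \<circ> k \<circ> inv_fun ?g"
    using h unfolding conjg_subgroup_GammaO[OF Gh subgroup_GammaO_inv_fun[OF Gh g]] by (auto simp: inv_inv_eq)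
  have "(inv_fun frame \<circ> h \<circ> frame) \<circ> M = M \<circ> (inv_fun frame \<circ> k \<circ> frame)"
    unfolding h_eq inv_conj[OF bij_frame M] by (simp add: fun_eq_iff bij_inv_fun_apply M bij_frame)
  then show ?thesis using that k by blast
qed

lemma inter_conj_stabiliser_subset_Scalars:
  assumes Gh: "subgroup Gh GammaO"
    and t: "t \<noteq> 0" "\<And>x. x \<noteq> 0 \<Longrightarrow> \<exists>n. x = t ^ n"
    and g1: "frame \<circ> M1 t \<circ> inv_fun frame \<in> Gh" and g2: "frame \<circ> M2 \<circ> inv_fun frame \<in> Gh"
  shows "carrier (GammaO\<lparr>carrier := Gh\<rparr>) \<inter> (\<Inter>g\<in>{id, inv_fun (frame \<circ> M1 t \<circ> inv_fun frame),
      inv_fun (frame \<circ> M2 \<circ> inv_fun frame)}. conjg (GammaO\<lparr>carrier := Gh\<rparr>) (decomp_stab Gh D) g)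
    \<subseteq> Scalars"
proof
  let ?G = "GammaO\<lparr>carrier := Gh\<rparr>" and ?H = "decomp_stab Gh D"
  fix h assume "h \<in> carrier ?G \<inter> (\<Inter>g\<in>{id, inv_fun (frame \<circ> M1 t \<circ> inv_fun frame),
      inv_fun (frame \<circ> M2 \<circ> inv_fun frame)}. conjg ?G ?H g)"
  moreover have "conjg ?G ?H id = ?H"
    using conjg_subgroup_GammaO[OF Gh subgroup_GammaO_id[OF Gh]] by simp
  ultimately have h: "h \<in> ?H" and h1: "h \<in> conjg ?G ?H (inv_fun (frame \<circ> M1 t \<circ> inv_fun frame))"
    and h2: "h \<in> conjg ?G ?H (inv_fun (frame \<circ> M2 \<circ> inv_fun frame))"
    by blast+
  obtain k1 where k1: "k1 \<in> decomp_stab Gh D"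
    "(inv_fun frame \<circ> h \<circ> frame) \<circ> M1 t = M1 t \<circ> (inv_fun frame \<circ> k1 \<circ> frame)"
    using conj_stabiliser_intertwining[OF Gh g1 bij_M1 h1] .
  obtain k2 where k2: "k2 \<in> decomp_stab Gh D"
    "(inv_fun frame \<circ> h \<circ> frame) \<circ> M2 = M2 \<circ> (inv_fun frame \<circ> k2 \<circ> frame)"
    using conj_stabiliser_intertwining[OF Gh g2 bij_M2 h2] .
  obtain s a \<tau> where hm: "field_aut s" "semilinear (inv_fun frame \<circ> h \<circ> frame) s"
      "monomial (inv_fun frame \<circ> h \<circ> frame) a \<tau>"
    by (rule stabiliser_conj_monomial[OF decomp_stab_semisim[OF Gh h]])
  obtain b1 \<pi>1 where "monomial (inv_fun frame \<circ> k1 \<circ> frame) b1 \<pi>1"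
    using stabiliser_conj_monomial[OF decomp_stab_semisim[OF Gh k1(1)]] by blast
  moreover obtain b2 \<pi>2 where "monomial (inv_fun frame \<circ> k2 \<circ> frame) b2 \<pi>2"
    using stabiliser_conj_monomial[OF decomp_stab_semisim[OF Gh k2(1)]] by blast
  ultimately have ht: "inv_fun frame \<circ> h \<circ> frame = smul (a 0)"
    by (rule monomial_commuting_M1_M2_scalar[OF hm _ k1(2) _ k2(2) t])
  have "h x = frame ((inv_fun frame \<circ> h \<circ> frame) (inv_fun frame x))" for x
    using bij_frame by (simp add: bij_inv_fun_apply)
  then have "h = smul (a 0)"
    unfolding ht using bij_frame by (simp add: fun_eq_iff frame_smul bij_inv_fun_apply del: smul_apply)
  moreover have "a 0 \<noteq> 0" using hm(3) by (simp add: monomial_def)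
  ultimately show "h \<in> Scalars" unfolding Scalars_def by blast
qed

end

lemma plus_decomp_hyperbolic_frame:
  assumes "plus_decomp (D :: 'k::{field,finite} vect set set)"
  obtains \<nu> e f where "hyperbolic_frame D \<nu> e f"
proof -
  have D: "card D = 5" "\<And>W. W \<in> D \<Longrightarrow> plus_type_2space W"
    "\<And>W W' x y. W \<in> D \<Longrightarrow> W' \<in> D \<Longrightarrow> W \<noteq> W' \<Longrightarrow> x \<in> W \<Longrightarrow> y \<in> W' \<Longrightarrow> Bf x y = 0"
    using assms unfolding plus_decomp_def by auto
  have "finite D" using D(1) by (intro card_ge_0_finite) simp
  then obtain \<nu> where "bij_betw \<nu> {0..<card D} D" using ex_bij_betw_nat_finite by blast
  then have \<nu>: "bij_betw \<nu> {..<5} D" by (simp add: D(1) atLeast0LessThan)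
  have "\<forall>i. \<exists>ef. i < 5 \<longrightarrow> fst ef \<in> \<nu> i \<and> snd ef \<in> \<nu> i \<and> Qf (fst ef) = 0 \<and> Qf (snd ef) = 0
      \<and> Bf (fst ef) (snd ef) = 1"
  proof
    fix i
    show "\<exists>ef. i < 5 \<longrightarrow> fst ef \<in> \<nu> i \<and> snd ef \<in> \<nu> i \<and> Qf (fst ef) = 0 \<and> Qf (snd ef) = 0
      \<and> Bf (fst ef) (snd ef) = 1"
    proof (cases "i < 5")
      case True
      then have "plus_type_2space (\<nu> i)" using D(2) bij_betwE[OF \<nu>] by blast
      then obtain e f where "e \<in> \<nu> i" "f \<in> \<nu> i" "Qf e = 0" "Qf f = 0" "Bf e f = 1"
        by (rule plus_type_2space_hyperbolic_pair)
      then show ?thesis by (intro exI[of _ "(e, f)"]) simp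
    qed simp
  qed
  then obtain P where P: "\<And>i. i < 5 \<Longrightarrow> fst (P i) \<in> \<nu> i \<and> snd (P i) \<in> \<nu> i \<and> Qf (fst (P i)) = 0
      \<and> Qf (snd (P i)) = 0 \<and> Bf (fst (P i)) (snd (P i)) = 1"
    by metis
  have "hyperbolic_frame D \<nu> (\<lambda>i. fst (P i)) (\<lambda>i. snd (P i))"
  proof
    show "bij_betw \<nu> {..<5} D" by (rule \<nu>)
    show "W \<in> D \<Longrightarrow> two_space W" for W using D(2) by (simp add: plus_type_2space_def)
  qed (use D(3) P in blast)+
  then show ?thesis by (rule that)
qed

theorem lemma3p20:
  fixes Gh :: "('k::{field,finite} vect \<Rightarrow> 'k vect) set"
    and D :: "'k vect set set"
  assumes "CARD('k) \<ge> 8"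
    and "subgroup Gh GammaO"
    and "Omega \<subseteq> Gh" and "Scalars \<subseteq> Gh"
    and "plus_decomp D"
  shows "base_size (GammaO\<lparr>carrier := Gh\<rparr>) (decomp_stab Gh D) \<le> 3"
proof -
  let ?G = "GammaO\<lparr>carrier := Gh\<rparr>" and ?H = "decomp_stab Gh D"
  obtain \<nu> e f where "hyperbolic_frame D \<nu> e f" by (rule plus_decomp_hyperbolic_frame[OF assms(5)])
  then interpret hyperbolic_frame D \<nu> e f .
  obtain t :: 'k where t: "t \<noteq> 0" "\<And>x. x \<noteq> 0 \<Longrightarrow> \<exists>n. x = t ^ n"
    using finite_field_primitive_element by blast
  txt \<open>The bound \<open>q \<ge> 8\<close> is only needed in the form \<open>q \<ge> 3\<close>.\<close>
  have "CARD('k) \<ge> 3" using assms(1) by simp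
  then obtain c :: 'k where c: "c \<noteq> 0" "c \<noteq> 1" by (rule exists_neq_0_1)
  let ?g1 = "frame \<circ> M1 t \<circ> inv_fun frame" and ?g2 = "frame \<circ> M2 \<circ> inv_fun frame"
  have g: "?g1 \<in> Gh" "?g2 \<in> Gh"
    using conj_M1_in_Omega[OF c isometry_frame] conj_M2_in_Omega[OF c isometry_frame] assms(3) by blast+
  let ?S = "{id, inv_fun ?g1, inv_fun ?g2}"
  have "?S \<subseteq> carrier ?G"
    using subgroup_GammaO_id[OF assms(2)] subgroup_GammaO_inv_fun[OF assms(2) g(1)]
      subgroup_GammaO_inv_fun[OF assms(2) g(2)] by simp
  moreover have "carrier ?G \<inter> (\<Inter>g\<in>?S. conjg ?G ?H g) \<subseteq> core ?G ?H"
    using inter_conj_stabiliser_subset_Scalars[OF assms(2) t g] Scalars_subset_core[OF assms(2,4)]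
      plus_decomp_two_space[OF assms(5)] by blast
  ultimately have "base_size ?G ?H \<le> card ?S" by (intro base_size_le_card) simp_all
  also have "\<dots> \<le> 3" by (simp add: card_insert_le_m1)
  finally show ?thesis .
qed

end
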